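(* Let $\mathcal{P}_1,\mathcal{P}_2$ be finite posets with $p_j=|\mathcal{P}_j|$, and for $j=1,2$ let $\mathbf{V}_j\in\mathbb{R}^{p_j\times q_j}$ be a fixed matrix whose columns are the $q_j$ extremal rays of $\mathcal{C}(\mathcal{P}_j)$ (one representative vector per ray). Then for every matrix $\mathbf{T}\in\mathcal{N}_{<\infty}$, the nondecreasing rank of $\mathbf{T}$ equals the smallest nonnegative rank of a matrix $\mathbf{H}\in\mathbb{R}^{q_1\times q_2}$ with nonnegative entries satisfying $\mathbf{T}=\mathbf{V}_1\mathbf{H}\mathbf{V}_2^\intercal$.
   Context: For a finite poset $\mathcal{Q}$, the order cone $\mathcal{C}(\mathcal{Q})$ is the set of $\mathbf{f}\in\mathbb{R}^{\mathcal{Q}}$ with $f_x\ge0$ for all $x$ and $f_x\le f_y$ whenever $x\preceq y$; it is a polyhedral cone with finitely many extremal rays (one-dimensional faces). $\mathcal{N}_{<\infty}$ is the set of matrices $\mathbf{T}=\sum_{i=1}^r\mathbf{a}_i\mathbf{b}_i^\intercal$ (finite $r$) with $\mathbf{a}_i\in\mathcal{C}(\mathcal{P}_1)$, $\mathbf{b}_i\in\mathcal{C}(\mathcal{P}_2)$, and the nondecreasing rank is the minimal such $r$. The nonnegative rank of a nonnegative matrix $\mathbf{H}$ is the minimal $r$ with $\mathbf{H}=\sum_{i=1}^r\mathbf{c}_i\mathbf{d}_i^\intercal$, $\mathbf{c}_i,\mathbf{d}_i$ entrywise nonnegative. *)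

theory Defs
  imports "HOL-Analysis.Analysis"
begin

text \<open>A finite poset is modelled as a finite type with a partial order;
  vectors in R^P are elements of real^'a.\<close>

definition order_cone :: "(real ^ 'a::{finite,order}) set" where
  "order_cone = {f. (\<forall>x. 0 \<le> f $ x) \<and> (\<forall>x y. x \<le> y \<longrightarrow> f $ x \<le> f $ y)}"

definition extremal_rays :: "(real ^ 'a::{finite,order}) set set" where
  "extremal_rays = {F. F face_of (order_cone :: (real ^ 'a::{finite,order}) set) \<and> aff_dim F = 1}"

definition ray_of :: "'v::real_vector \<Rightarrow> 'v set" where
  "ray_of v = {c *\<^sub>R v | c. 0 \<le> c}"

definition outer :: "real ^ 'm \<Rightarrow> real ^ 'n \<Rightarrow> real ^ 'n ^ 'm" where
  "outer a b = (\<chi> i j. a $ i * b $ j)"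

definition nonneg_vec :: "real ^ 'n \<Rightarrow> bool" where
  "nonneg_vec v \<longleftrightarrow> (\<forall>i. 0 \<le> v $ i)"

definition nonneg_mat :: "real ^ 'n ^ 'm \<Rightarrow> bool" where
  "nonneg_mat H \<longleftrightarrow> (\<forall>i j. 0 \<le> H $ i $ j)"

definition nd_decomp :: "real ^ 'b::{finite,order} ^ 'a::{finite,order} \<Rightarrow> nat \<Rightarrow> bool" where
  "nd_decomp T r \<longleftrightarrow> (\<exists>a b. (\<forall>i<r. a i \<in> order_cone \<and> b i \<in> order_cone)
       \<and> T = (\<Sum>i<r. outer (a i) (b i)))"

definition N_fin :: "(real ^ 'b::{finite,order} ^ 'a::{finite,order}) set" where
  "N_fin = {T. \<exists>r. nd_decomp T r}"

definition nd_rank :: "real ^ 'b::{finite,order} ^ 'a::{finite,order} \<Rightarrow> nat" where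
  "nd_rank T = (LEAST r. nd_decomp T r)"

definition nonneg_rank :: "real ^ 'n ^ 'm \<Rightarrow> nat" where
  "nonneg_rank H = (LEAST r. \<exists>c d. (\<forall>i<r. nonneg_vec (c i) \<and> nonneg_vec (d i))
       \<and> H = (\<Sum>i<r. outer (c i) (d i)))"

end

theory Submission
  imports Defs
begin

text \<open>The indicator vector of an up-set that is connected in the comparability graph spans an
  extremal ray of the order cone, and these indicators generate the cone: from a nonzero f,
  subtract the largest multiple of the indicator of the comparability component of its support
  through some point; the result stays in the cone and has strictly smaller support. Hence the
  columns of V1 and V2 generate the respective order cones, so an outer product a b^T of
  order-cone vectors is V1 (\<alpha> \<beta>^T) V2^T with \<alpha>, \<beta> \<ge> 0, and conversely. Decompositions of T into
  r nondecreasing outer products and nonnegative decompositions of length r of matrices H with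
  T = V1 H V2^T therefore correspond to each other.\<close>

definition indicator_vec :: "'a set \<Rightarrow> real ^ 'a" where
  "indicator_vec C = (\<chi> x. if x \<in> C then 1 else 0)"

definition comparable_within :: "'a::order set \<Rightarrow> ('a \<times> 'a) set" where
  "comparable_within U = {(p, q). p \<in> U \<and> q \<in> U \<and> (p \<le> q \<or> q \<le> p)}"

definition nonneg_decomp :: "real ^ 'n ^ 'm \<Rightarrow> nat \<Rightarrow> bool" where
  "nonneg_decomp H r \<longleftrightarrow> (\<exists>c d. (\<forall>i<r. nonneg_vec (c i) \<and> nonneg_vec (d i))
       \<and> H = (\<Sum>i<r. outer (c i) (d i)))"

lemma nonneg_rank_eq_Least_nonneg_decomp: "nonneg_rank H = (LEAST r. nonneg_decomp H r)"
  by (simp add: nonneg_rank_def nonneg_decomp_def)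

lemma in_ray_of_self: "v \<in> ray_of v"
  unfolding ray_of_def by (auto intro: exI[of _ 1])

lemma convex_ray_of: "convex (ray_of v)"
  unfolding convex_def ray_of_def
proof clarify
  fix c1 c2 u w :: real
  assume "0 \<le> c1" "0 \<le> c2" "0 \<le> u" "0 \<le> w"
  then show "\<exists>c. u *\<^sub>R c1 *\<^sub>R v + w *\<^sub>R c2 *\<^sub>R v = c *\<^sub>R v \<and> 0 \<le> c"
    by (intro exI[of _ "u * c1 + w * c2"]) (simp add: scaleR_add_left)
qed

lemma aff_dim_ray_of:
  fixes v :: "'a::euclidean_space"
  assumes "v \<noteq> 0"
  shows "aff_dim (ray_of v) = 1"
proof -
  have "{0, v} \<subseteq> ray_of v"
    unfolding ray_of_def by (auto intro: exI[of _ 0] exI[of _ 1])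
  moreover have "ray_of v \<subseteq> span {v}"
    unfolding ray_of_def by (auto intro: span_mul span_base)
  ultimately have "aff_dim {0, v} \<le> aff_dim (ray_of v)" "aff_dim (ray_of v) \<le> aff_dim (span {v})"
    by (metis aff_dim_subset)+
  moreover have "aff_dim (span {v}) = 1"
    using assms by (simp add: aff_dim_subspace)
  ultimately show ?thesis
    using assms by simp
qed

lemma extremal_rays_subset_order_cone: "F \<in> extremal_rays \<Longrightarrow> F \<subseteq> order_cone"
  unfolding extremal_rays_def face_of_def by blast

lemma matrix_vector_mult_in_order_cone:
  fixes V :: "real ^ 'r ^ 'a::{finite,order}"
  assumes "\<And>k. column k V \<in> order_cone" and "nonneg_vec \<alpha>"
  shows "V *v \<alpha> \<in> order_cone"
  using assms unfolding order_cone_def matrix_vector_mult_def column_def nonneg_vec_def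
  by (auto intro!: sum_nonneg sum_mono mult_right_mono)

lemma comparability_component_subset:
  "x0 \<in> U \<Longrightarrow> (comparable_within U)\<^sup>* `` {x0} \<subseteq> U"
proof
  fix y assume "x0 \<in> U" "y \<in> (comparable_within U)\<^sup>* `` {x0}"
  then have "(x0, y) \<in> (comparable_within U)\<^sup>*" "x0 \<in> U" by auto
  then show "y \<in> U"
    by (induction rule: rtrancl_induct) (auto simp: comparable_within_def)
qed

lemma comparability_component_closed:
  assumes "y \<in> (comparable_within U)\<^sup>* `` {x0}" "x0 \<in> U" "x \<in> U" "x \<le> y \<or> y \<le> x"
  shows "x \<in> (comparable_within U)\<^sup>* `` {x0}"
proof -
  have "y \<in> U"
    using comparability_component_subset[OF assms(2)] assms(1) by blast
  with assms(3,4) have "(y, x) \<in> comparable_within U"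
    by (auto simp: comparable_within_def)
  with assms(1) show ?thesis
    by (auto intro: rtrancl_into_rtrancl)
qed

lemma comparability_component_connected:
  fixes U :: "'a::order set" and x0 :: 'a
  defines "C \<equiv> (comparable_within U)\<^sup>* `` {x0}"
  shows "C \<subseteq> (comparable_within C)\<^sup>* `` {x0}"
proof
  fix y assume "y \<in> C"
  then have "(x0, y) \<in> (comparable_within U)\<^sup>*" by (simp add: C_def)
  then have "(x0, y) \<in> (comparable_within C)\<^sup>*"
  proof (induction rule: rtrancl_induct)
    case (step p q)
    then have "p \<in> C" "q \<in> C"
      unfolding C_def by (auto intro: rtrancl_into_rtrancl)
    with step have "(p, q) \<in> comparable_within C"
      by (simp add: comparable_within_def)
    with step.IH show ?case by (rule rtrancl_into_rtrancl)
  qed simp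
  then show "y \<in> (comparable_within C)\<^sup>* `` {x0}" by simp
qed

subsection \<open>Extremal rays of the order cone\<close>

lemma convex_combination_eq_mono:
  fixes u x x' y y' :: real
  assumes "0 < u" "u < 1" "x \<le> x'" "y \<le> y'" "(1 - u) * x + u * y = (1 - u) * x' + u * y'"
  shows "x = x'"
proof -
  have "(1 - u) * x \<le> (1 - u) * x'" "u * y \<le> u * y'"
    using assms by (simp_all add: mult_left_mono)
  with assms(5) have "(1 - u) * x = (1 - u) * x'" by linarith
  with assms(2) show ?thesis by simp
qed

lemma order_cone_segment_indicator:
  fixes a b :: "real ^ 'a::{finite,order}"
  assumes a: "a \<in> order_cone" and b: "b \<in> order_cone" and u: "0 < u" "u < 1"
    and ab: "(1 - u) *\<^sub>R a + u *\<^sub>R b = c *\<^sub>R indicator_vec C"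
    and conn: "C \<subseteq> (comparable_within C)\<^sup>* `` {x0}"
  shows "a = a $ x0 *\<^sub>R indicator_vec C"
proof -
  have comp: "(1 - u) * a $ y + u * b $ y = (if y \<in> C then c else 0)" for y
    using arg_cong[OF ab, of "\<lambda>v. v $ y"] by (simp add: indicator_vec_def)
  have nonneg: "0 \<le> a $ y" "0 \<le> b $ y" for y
    using a b by (auto simp: order_cone_def)
  have mono: "a $ p \<le> a $ q" "b $ p \<le> b $ q" if "p \<le> q" for p q
    using a b that by (auto simp: order_cone_def)
  have outside: "a $ y = 0" if "y \<notin> C" for y
  proof -
    have "(1 - u) * a $ y + u * b $ y = 0"
      using comp[of y] that by simp
    moreover have "0 \<le> (1 - u) * a $ y" "0 \<le> u * b $ y"
      using nonneg[of y] u by simp_all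
    ultimately have "(1 - u) * a $ y = 0" by linarith
    with u show ?thesis by simp
  qed
  have inside: "a $ y = a $ x0" if "y \<in> C" for y
  proof -
    from that conn have "(x0, y) \<in> (comparable_within C)\<^sup>*" by auto
    then show ?thesis
    proof (induction rule: rtrancl_induct)
      case (step p q)
      then have "p \<in> C" "q \<in> C" and comparable: "p \<le> q \<or> q \<le> p"
        by (auto simp: comparable_within_def)
      then have same: "(1 - u) * a $ p + u * b $ p = (1 - u) * a $ q + u * b $ q"
        using comp[of p] comp[of q] by simp
      have "a $ p = a $ q"
        using comparable
      proof
        assume "p \<le> q"
        show ?thesis
          by (rule convex_combination_eq_mono[OF u mono[OF \<open>p \<le> q\<close>] same])
      next
        assume "q \<le> p"
        show ?thesis
          by (rule convex_combination_eq_mono[OF u mono[OF \<open>q \<le> p\<close>] same[symmetric], symmetric])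
      qed
      with step.IH show ?case by simp
    qed simp
  qed
  show ?thesis
    by (simp add: vec_eq_iff indicator_vec_def outside inside)
qed

lemma indicator_vec_ray_in_extremal_rays:
  fixes C :: "'a::{finite,order} set"
  assumes x0: "x0 \<in> C"
    and up: "\<And>x y. x \<in> C \<Longrightarrow> x \<le> y \<Longrightarrow> y \<in> C"
    and conn: "C \<subseteq> (comparable_within C)\<^sup>* `` {x0}"
  shows "ray_of (indicator_vec C) \<in> extremal_rays"
proof -
  have "indicator_vec C $ x0 \<noteq> 0"
    using x0 by (simp add: indicator_vec_def)
  then have nonzero: "indicator_vec C \<noteq> 0" by auto
  have sub: "ray_of (indicator_vec C) \<subseteq> order_cone"
    unfolding ray_of_def order_cone_def indicator_vec_def using up by auto
  have "a \<in> ray_of (indicator_vec C) \<and> b \<in> ray_of (indicator_vec C)"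
    if a: "a \<in> order_cone" and b: "b \<in> order_cone"
      and "x \<in> ray_of (indicator_vec C)" "x \<in> open_segment a b" for a b x
  proof -
    obtain c where c: "x = c *\<^sub>R indicator_vec C"
      using \<open>x \<in> ray_of _\<close> unfolding ray_of_def by auto
    obtain u where u: "0 < u" "u < 1" and "x = (1 - u) *\<^sub>R a + u *\<^sub>R b"
      using \<open>x \<in> open_segment a b\<close> unfolding in_segment by auto
    with c have eq: "(1 - u) *\<^sub>R a + u *\<^sub>R b = c *\<^sub>R indicator_vec C"
      by simp
    then have eq': "(1 - (1 - u)) *\<^sub>R b + (1 - u) *\<^sub>R a = c *\<^sub>R indicator_vec C"
      by (simp add: add.commute)
    have "b = b $ x0 *\<^sub>R indicator_vec C"
      using order_cone_segment_indicator[where u = "1 - u", OF b a _ _ eq' conn] u by simp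
    moreover have "a = a $ x0 *\<^sub>R indicator_vec C"
      by (rule order_cone_segment_indicator[OF a b u eq conn])
    moreover have "0 \<le> a $ x0" "0 \<le> b $ x0"
      using a b by (auto simp: order_cone_def)
    ultimately show ?thesis
      unfolding ray_of_def by blast
  qed
  then show ?thesis
    unfolding extremal_rays_def face_of_def
    using sub convex_ray_of aff_dim_ray_of[OF nonzero] by blast
qed

subsection \<open>Generating the order cone\<close>

lemma diff_indicator_vec_in_order_cone:
  fixes f :: "real ^ 'a::{finite,order}"
  assumes f: "f \<in> order_cone"
    and below: "\<And>y. y \<in> C \<Longrightarrow> t \<le> f $ y"
    and up: "\<And>x y. x \<in> C \<Longrightarrow> x \<le> y \<Longrightarrow> y \<in> C"
    and boundary: "\<And>x y. x \<le> y \<Longrightarrow> y \<in> C \<Longrightarrow> x \<notin> C \<Longrightarrow> f $ x = 0"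
  shows "f - t *\<^sub>R indicator_vec C \<in> order_cone"
proof -
  have "0 \<le> f $ x" "x \<le> y \<Longrightarrow> f $ x \<le> f $ y" for x y
    using f by (auto simp: order_cone_def)
  then show ?thesis
    using below up boundary by (fastforce simp: order_cone_def indicator_vec_def)
qed

lemma order_cone_peel_indicator_vec:
  fixes f :: "real ^ 'a::{finite,order}"
  assumes f: "f \<in> order_cone" and "f $ x0 \<noteq> 0"
  obtains C t where "ray_of (indicator_vec C) \<in> extremal_rays" "0 < t"
    "f - t *\<^sub>R indicator_vec C \<in> order_cone"
    "{x. (f - t *\<^sub>R indicator_vec C) $ x \<noteq> 0} \<subset> {x. f $ x \<noteq> 0}"
proof -
  define U where "U = {x. f $ x \<noteq> 0}"
  define C where "C = (comparable_within U)\<^sup>* `` {x0}"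
  have mono: "x \<le> y \<Longrightarrow> f $ x \<le> f $ y" for x y
    using f by (auto simp: order_cone_def)
  have pos: "y \<in> U \<longleftrightarrow> 0 < f $ y" for y
  proof -
    have "0 \<le> f $ y"
      using f by (simp add: order_cone_def)
    then show ?thesis
      by (auto simp: U_def)
  qed
  have x0: "x0 \<in> U" "x0 \<in> C"
    using \<open>f $ x0 \<noteq> 0\<close> by (simp_all add: U_def C_def)
  have CU: "C \<subseteq> U"
    unfolding C_def using comparability_component_subset[OF x0(1)] .
  have closed: "x \<in> C" if "x \<in> U" "y \<in> C" "x \<le> y \<or> y \<le> x" for x y
    using comparability_component_closed[OF _ x0(1) that(1)] that(2,3) by (simp add: C_def)
  have up: "y \<in> C" if "x \<in> C" "x \<le> y" for x y
    using closed[of y x] mono[OF \<open>x \<le> y\<close>] pos CU that by force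
  have conn: "C \<subseteq> (comparable_within C)\<^sup>* `` {x0}"
    unfolding C_def by (rule comparability_component_connected)
  have ray: "ray_of (indicator_vec C) \<in> extremal_rays"
    using indicator_vec_ray_in_extremal_rays[OF x0(2) up conn] by simp
  define t where "t = Min ((\<lambda>y. f $ y) ` C)"
  have below: "t \<le> f $ y" if "y \<in> C" for y
    using that by (simp add: t_def)
  have "t \<in> (\<lambda>y. f $ y) ` C"
    unfolding t_def using x0(2) by (intro Min_in) auto
  then obtain y1 where y1: "y1 \<in> C" "f $ y1 = t"
    by auto
  then have "0 < t"
    using CU pos by auto
  \<comment> \<open>a point comparable to an element of C but outside C is outside the support of f\<close>
  have "f - t *\<^sub>R indicator_vec C \<in> order_cone"
    using diff_indicator_vec_in_order_cone[OF f below up] closed pos mono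
    by (force simp: U_def)
  moreover have "{x. (f - t *\<^sub>R indicator_vec C) $ x \<noteq> 0} \<subset> {x. f $ x \<noteq> 0}"
    using CU y1 \<open>0 < t\<close> by (auto simp: U_def indicator_vec_def)
  ultimately show thesis
    using that ray \<open>0 < t\<close> by blast
qed

lemma order_cone_nonneg_combination_of_columns:
  fixes V :: "real ^ 'r ^ 'a::{finite,order}"
  assumes rays: "\<And>F. F \<in> extremal_rays \<Longrightarrow> \<exists>k. F = ray_of (column k V)"
  shows "f \<in> order_cone \<Longrightarrow> \<exists>\<alpha>. nonneg_vec \<alpha> \<and> f = V *v \<alpha>"
proof (induction "card {x. f $ x \<noteq> 0}" arbitrary: f rule: less_induct)
  case less
  show ?case
  proof (cases "f = 0")
    case True
    then show ?thesis
      by (intro exI[of _ 0]) (simp add: nonneg_vec_def)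
  next
    case False
    then obtain x0 where "f $ x0 \<noteq> 0"
      by (auto simp: vec_eq_iff)
    with less.prems obtain C t where ray: "ray_of (indicator_vec C) \<in> extremal_rays"
      and "0 < t" and cone: "f - t *\<^sub>R indicator_vec C \<in> order_cone"
      and support: "{x. (f - t *\<^sub>R indicator_vec C) $ x \<noteq> 0} \<subset> {x. f $ x \<noteq> 0}"
      by (rule order_cone_peel_indicator_vec)
    obtain k where "ray_of (indicator_vec C) = ray_of (column k V)"
      using rays[OF ray] by blast
    then obtain c where c: "indicator_vec C = c *\<^sub>R column k V" "0 \<le> c"
      using in_ray_of_self[of "indicator_vec C"] unfolding ray_of_def by auto
    have "card {x. (f - t *\<^sub>R indicator_vec C) $ x \<noteq> 0} < card {x. f $ x \<noteq> 0}"
      using support by (simp add: psubset_card_mono)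
    then obtain \<beta> where \<beta>: "nonneg_vec \<beta>" "f - t *\<^sub>R indicator_vec C = V *v \<beta>"
      using less.hyps cone by blast
    have "f = V *v \<beta> + (t * c) *\<^sub>R column k V"
      using \<beta>(2) c(1) by (simp add: algebra_simps)
    also have "\<dots> = V *v (\<beta> + (t * c) *\<^sub>R axis k 1)"
      by (simp add: matrix_vector_right_distrib matrix_vector_mult_scaleR matrix_vector_mult_basis)
    finally have "f = V *v (\<beta> + (t * c) *\<^sub>R axis k 1)" .
    moreover have "nonneg_vec (\<beta> + (t * c) *\<^sub>R axis k 1)"
      using \<beta>(1) \<open>0 < t\<close> c(2) by (simp add: nonneg_vec_def axis_def)
    ultimately show ?thesis
      by blast
  qed
qed

subsection \<open>Nondecreasing and nonnegative decompositions\<close>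

lemma matrix_mult_sum_outer:
  fixes A :: "real ^ 'r ^ 'a" and B :: "real ^ 's ^ 'b"
  shows "A ** (\<Sum>i\<in>I. outer (c i) (d i)) ** transpose B = (\<Sum>i\<in>I. outer (A *v c i) (B *v d i))"
  by (simp add: vec_eq_iff matrix_matrix_mult_def matrix_vector_mult_def outer_def transpose_def
      sum_component sum_distrib_left sum_distrib_right mult_ac sum.swap[of _ I])

lemma nonneg_decomp_rows:
  fixes H :: "real ^ 's ^ 'r"
  assumes "nonneg_mat H"
  shows "nonneg_decomp H CARD('r)"
proof -
  obtain g :: "nat \<Rightarrow> 'r" where g: "bij_betw g {..<CARD('r)} UNIV"
    using ex_bij_betw_nat_finite[of "UNIV :: 'r set"] by (auto simp: atLeast0LessThan)
  have "H = (\<Sum>k\<in>UNIV. outer (axis k 1) (H $ k))"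
    by (simp add: vec_eq_iff outer_def axis_def sum_component if_distrib if_distribR cong: if_cong)
  also have "\<dots> = (\<Sum>i<CARD('r). outer (axis (g i) 1) (H $ g i))"
    using sum.reindex_bij_betw[OF g, of "\<lambda>k. outer (axis k 1) (H $ k)"] by simp
  finally show ?thesis
    unfolding nonneg_decomp_def using assms
    by (intro exI[of _ "\<lambda>i. axis (g i) 1"] exI[of _ "\<lambda>i. H $ g i"])
      (simp add: nonneg_vec_def nonneg_mat_def axis_def)
qed

lemma nonneg_decomp_nonneg_rank:
  assumes "nonneg_mat H"
  shows "nonneg_decomp H (nonneg_rank H)"
  unfolding nonneg_rank_eq_Least_nonneg_decomp using nonneg_decomp_rows[OF assms] by (rule LeastI)

lemma nd_decomp_nd_rank: "T \<in> N_fin \<Longrightarrow> nd_decomp T (nd_rank T)"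
  unfolding N_fin_def nd_rank_def by (auto intro: LeastI)

lemma nd_rank_le_nonneg_rank:
  fixes V1 :: "real ^ 'r ^ 'a::{finite,order}" and V2 :: "real ^ 's ^ 'b::{finite,order}"
  assumes cols1: "\<And>k. column k V1 \<in> order_cone" and cols2: "\<And>k. column k V2 \<in> order_cone"
    and "nonneg_mat H"
  shows "nd_rank (V1 ** H ** transpose V2) \<le> nonneg_rank H"
proof -
  obtain c d where cd: "\<forall>i<nonneg_rank H. nonneg_vec (c i) \<and> nonneg_vec (d i)"
    and H: "H = (\<Sum>i<nonneg_rank H. outer (c i) (d i))"
    using nonneg_decomp_nonneg_rank[OF \<open>nonneg_mat H\<close>] unfolding nonneg_decomp_def by blast
  have "V1 ** H ** transpose V2 = (\<Sum>i<nonneg_rank H. outer (V1 *v c i) (V2 *v d i))"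
    by (subst H) (rule matrix_mult_sum_outer)
  then have "nd_decomp (V1 ** H ** transpose V2) (nonneg_rank H)"
    unfolding nd_decomp_def using cd
    by (intro exI[of _ "\<lambda>i. V1 *v c i"] exI[of _ "\<lambda>i. V2 *v d i"])
      (simp add: matrix_vector_mult_in_order_cone cols1 cols2)
  then show ?thesis
    unfolding nd_rank_def by (rule Least_le)
qed

lemma nonneg_factorization_of_nd_decomp:
  fixes V1 :: "real ^ 'r ^ 'a::{finite,order}" and V2 :: "real ^ 's ^ 'b::{finite,order}"
  assumes rays1: "\<And>F. F \<in> extremal_rays \<Longrightarrow> \<exists>k. F = ray_of (column k V1)"
    and rays2: "\<And>F. F \<in> extremal_rays \<Longrightarrow> \<exists>k. F = ray_of (column k V2)"
    and "nd_decomp T r"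
  obtains H where "nonneg_mat H" "T = V1 ** H ** transpose V2" "nonneg_rank H \<le> r"
proof -
  obtain a b where ab: "\<forall>i<r. a i \<in> order_cone \<and> b i \<in> order_cone"
    and T: "T = (\<Sum>i<r. outer (a i) (b i))"
    using \<open>nd_decomp T r\<close> unfolding nd_decomp_def by blast
  have "\<forall>i\<in>{..<r}. \<exists>\<alpha>. nonneg_vec \<alpha> \<and> a i = V1 *v \<alpha>"
    using ab order_cone_nonneg_combination_of_columns[OF rays1] by blast
  then obtain \<alpha> where \<alpha>: "\<forall>i\<in>{..<r}. nonneg_vec (\<alpha> i) \<and> a i = V1 *v \<alpha> i"
    by (rule bchoice[THEN exE])
  have "\<forall>i\<in>{..<r}. \<exists>\<beta>. nonneg_vec \<beta> \<and> b i = V2 *v \<beta>"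
    using ab order_cone_nonneg_combination_of_columns[OF rays2] by blast
  then obtain \<beta> where \<beta>: "\<forall>i\<in>{..<r}. nonneg_vec (\<beta> i) \<and> b i = V2 *v \<beta> i"
    by (rule bchoice[THEN exE])
  define H where "H = (\<Sum>i<r. outer (\<alpha> i) (\<beta> i))"
  have "nonneg_mat H"
    using \<alpha> \<beta> by (auto simp: H_def nonneg_mat_def nonneg_vec_def outer_def sum_component
        intro!: sum_nonneg)
  moreover have "T = V1 ** H ** transpose V2"
    unfolding H_def matrix_mult_sum_outer T using \<alpha> \<beta> by simp
  moreover have "nonneg_decomp H r"
    unfolding nonneg_decomp_def H_def using \<alpha> \<beta> by blast
  then have "nonneg_rank H \<le> r"
    unfolding nonneg_rank_eq_Least_nonneg_decomp by (rule Least_le)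
  ultimately show thesis
    using that by blast
qed

theorem lemma8:
  fixes V1 :: "real ^ 'r::finite ^ 'a::{finite,order}"
    and V2 :: "real ^ 's::finite ^ 'b::{finite,order}"
    and T :: "real ^ 'b::{finite,order} ^ 'a::{finite,order}"
  assumes "bij_betw (\<lambda>k. ray_of (column k V1)) UNIV (extremal_rays :: (real ^ 'a::{finite,order}) set set)"
    and "bij_betw (\<lambda>k. ray_of (column k V2)) UNIV (extremal_rays :: (real ^ 'b::{finite,order}) set set)"
    and "T \<in> N_fin"
  shows "nd_rank T = (LEAST n. \<exists>H :: real ^ 's ^ 'r.
           nonneg_mat H \<and> T = V1 ** H ** transpose V2 \<and> nonneg_rank H = n)"
proof -
  have rays1: "\<And>F. F \<in> extremal_rays \<Longrightarrow> \<exists>k. F = ray_of (column k V1)"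
    and rays2: "\<And>F. F \<in> extremal_rays \<Longrightarrow> \<exists>k. F = ray_of (column k V2)"
    using bij_betw_imp_surj_on[OF assms(1)] bij_betw_imp_surj_on[OF assms(2)] by blast+
  have cols1: "column k V1 \<in> order_cone" for k
    using bij_betwE[OF assms(1)] extremal_rays_subset_order_cone in_ray_of_self by blast
  have cols2: "column k V2 \<in> order_cone" for k
    using bij_betwE[OF assms(2)] extremal_rays_subset_order_cone in_ray_of_self by blast
  obtain H where H: "nonneg_mat H" "T = V1 ** H ** transpose V2" "nonneg_rank H \<le> nd_rank T"
    using nonneg_factorization_of_nd_decomp[OF rays1 rays2 nd_decomp_nd_rank[OF assms(3)]] .
  show ?thesis
  proof (rule Least_equality[symmetric])
    show "\<exists>H :: real ^ 's ^ 'r. nonneg_mat H \<and> T = V1 ** H ** transpose V2 \<and> nonneg_rank H = nd_rank T"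
      using H nd_rank_le_nonneg_rank[OF cols1 cols2 H(1)] by (intro exI[of _ H]) simp
  next
    fix n assume "\<exists>H :: real ^ 's ^ 'r. nonneg_mat H \<and> T = V1 ** H ** transpose V2 \<and> nonneg_rank H = n"
    then show "nd_rank T \<le> n"
      using nd_rank_le_nonneg_rank[OF cols1 cols2] by blast
  qed
qed

end
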